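(* Suppose that the solution set of problem $\min_{\boldsymbol\lambda,\mathbf p,\boldsymbol\mu\in\mathbb{R}^{N_h}}\Phi_h(\boldsymbol\lambda,\mathbf p,\boldsymbol\mu)$ is non-empty and let $\mathbf z^*=(\boldsymbol\lambda^*,\mathbf p^*,\boldsymbol\mu^* )$ be a solution. Let $\{\mathbf z^k\}=\{(\boldsymbol\lambda^k,\mathbf p^k,\boldsymbol\mu^k)\}$ be the sequence generated by the discrete sGS-mABCD algorithm started from $\mathbf z^0=(\boldsymbol\lambda^0,\mathbf p^0,\boldsymbol\mu^0)$. Then $$\Phi_h(\mathbf z^k)-\Phi_h(\mathbf z^* )\le\frac{4\tau_h}{(k+1)^2}\quad\forall k\ge1,\qquad \tau_h=\tfrac12\|\mathbf z^0-\mathbf z^*\|_{\mathcal S_h}^2,$$ where $$\mathcal S_h=\frac1\alpha\begin{pmatrix}M_hG_h^{-1}M_h+W_h-M_h&0&0\\0&0&0\\0&0&\gamma M_hW_h^{-1}M_h\end{pmatrix},\qquad G_h=M_h+\alpha K_hM_h^{-1}K_h.$$ Moreover, the sequence $\{(\boldsymbol\lambda^k,\mathbf p^k,\boldsymbol\mu^k)\}$ is bounded.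
   Context: Setting: $\Omega\subset\mathbb{R}^n$, $n\in\{2,3\}$, convex bounded domain; $\{\mathcal T_h\}$ regular quasi-uniform triangulations with mesh size $h$; $Y_h$ the space of continuous piecewise linear functions on $\mathcal T_h$ vanishing outside $\Omega_h$, with nodal basis $\{\phi_i\}_{i=1}^{N_h}$. The bilinear form is $a(y,v)=\int_\Omega(\sum_{i,j}a_{ji}y_{x_i}v_{x_j}+c_0yv)\,dx$ with $a_{ij}=a_{ji}, c_0\in L^\infty$, $c_0\ge0$, uniformly elliptic. Matrices: stiffness $K_h=(a(\phi_i,\phi_j))_{i,j}$, mass $M_h=(\int_{\Omega_h}\phi_i\phi_j\,dx)_{i,j}$, lumped mass $W_h=\mathrm{diag}(\int_{\Omega_h}\phi_i\,dx)_i$; $\gamma=4$ if $n=2$, $\gamma=5$ if $n=3$ (so that $\mathbf z^TM_h\mathbf z\le\mathbf z^TW_h\mathbf z\le\gamma\,\mathbf z^TM_h\mathbf z$). $\mathbf y_d,\mathbf y_r\in\mathbb{R}^{N_h}$ are coefficient vectors of the $L^2$-projections of $y_d,y_r\in L^2(\Omega)$ onto $Y_h$; $a\le0\le b$, $\alpha,\beta>0$. For a symmetric positive (semi)definite $P$, $\|\mathbf x\|_P^2=\mathbf x^TP\mathbf x$. The discrete dual objective is $$\Phi_h(\boldsymbol\lambda,\mathbf p,\boldsymbol\mu)=\tfrac12\|K_h\mathbf p-M_h\mathbf y_d\|_{M_h^{-1}}^2+\tfrac1{2\alpha}\|\boldsymbol\lambda+\boldsymbol\mu-\mathbf p\|_{M_h}^2+\langle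 M_h\mathbf y_r,\mathbf p\rangle+\delta_{[-\beta,\beta]}(\boldsymbol\lambda)+\delta^*_{[a,b]}(M_h\boldsymbol\mu)-\tfrac12\|\mathbf y_d\|_{M_h}^2,$$ where $\delta_{[-\beta,\beta]}$ is the indicator of the box $[-\beta,\beta]^{N_h}$ and $\delta^*_{[a,b]}(\boldsymbol\xi)=\sum_i\max(a\xi_i,b\xi_i)$. Discrete sGS-mABCD algorithm: given $\mathbf z^0$ with $\boldsymbol\lambda^0\in[-\beta,\beta]^{N_h}$, set $(\tilde{\boldsymbol\lambda}^1,\tilde{\mathbf p}^1,\tilde{\boldsymbol\mu}^1)=\mathbf z^0$, $t_1=1$. For $k\ge1$: (i) $\hat{\mathbf p}^k=\arg\min_{\mathbf p}\{\tfrac12\|K_h\mathbf p-M_h\mathbf y_d\|_{M_h^{-1}}^2+\tfrac1{2\alpha}\|\mathbf p-\tilde{\boldsymbol\lambda}^k-\tilde{\boldsymbol\mu}^k\|_{M_h}^2+\langle M_h\mathbf y_r,\mathbf p\rangle\}$; (ii) $\boldsymbol\lambda^k=\arg\min_{\boldsymbol\lambda}\{\delta_{[-\beta,\beta]}(\boldsymbol\lambda)+\tfrac1{2\alpha}\|\boldsymbol\lambda-(\hat{\mathbf p}^k-\tilde{\boldsymbol\mu}^k)\|_{M_h}^2+\tfrac1{2\alpha}\|\boldsymbol\lambda-\tilde{\boldsymbol\lambda}^k\|_{W_h-M_h}^2\}$ $=\Pi_{[-\beta,\beta]}(\tilde{\boldsymbol\lambda}^k+W_h^{-1}M_h(\hat{\mathbf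 p}^k-\tilde{\boldsymbol\mu}^k-\tilde{\boldsymbol\lambda}^k))$; (iii) $\mathbf p^k$ is defined as in (i) with $\tilde{\boldsymbol\lambda}^k$ replaced by $\boldsymbol\lambda^k$; (iv) $\boldsymbol\mu^k=\arg\min_{\boldsymbol\mu}\{\delta^*_{[a,b]}(M_h\boldsymbol\mu)+\tfrac1{2\alpha}\|\boldsymbol\mu-(\mathbf p^k-\boldsymbol\lambda^k)\|_{M_h}^2+\tfrac1{2\alpha}\|\boldsymbol\mu-\tilde{\boldsymbol\mu}^k\|^2_{\gamma M_hW_h^{-1}M_h-M_h}\}$; (v) $t_{k+1}=\frac{1+\sqrt{1+4t_k^2}}2$, $\beta_k=\frac{t_k-1}{t_{k+1}}$, $\tilde{\boldsymbol\lambda}^{k+1}=\boldsymbol\lambda^k+\beta_k(\boldsymbol\lambda^k-\boldsymbol\lambda^{k-1})$, and likewise for $\tilde{\mathbf p}^{k+1}$, $\tilde{\boldsymbol\mu}^{k+1}$. *)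

theory Defs
  imports "HOL-Analysis.Analysis"
begin

definition qf :: "real^'n^'n \<Rightarrow> real^'n \<Rightarrow> real" where
  "qf P x = x \<bullet> (P *v x)"

definition in_box :: "real \<Rightarrow> real^'n \<Rightarrow> bool" where
  "in_box \<beta> l \<longleftrightarrow> (\<forall>i. - \<beta> \<le> l $ i \<and> l $ i \<le> \<beta>)"

text \<open>Support function of [a,b]^N: sum_i max(a xi_i, b xi_i).\<close>
definition dstar :: "real \<Rightarrow> real \<Rightarrow> real^'n \<Rightarrow> real" where
  "dstar a b \<xi> = (\<Sum>i\<in>UNIV. max (a * \<xi> $ i) (b * \<xi> $ i))"

text \<open>Discrete dual objective Phi_h (extended-real valued; the indicator of the box gives +infinity).\<close>
definition Phi_h :: "real^'n^'n \<Rightarrow> real^'n^'n \<Rightarrow> real^'n \<Rightarrow> real^'n \<Rightarrow> real \<Rightarrow> real \<Rightarrow> real \<Rightarrow> real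
    \<Rightarrow> real^'n \<Rightarrow> real^'n \<Rightarrow> real^'n \<Rightarrow> ereal" where
  "Phi_h K M yd yr \<alpha> \<beta> a b l p m =
     (if in_box \<beta> l then
        ereal (1/2 * qf (matrix_inv M) (K *v p - M *v yd)
               + 1/(2*\<alpha>) * qf M (l + m - p)
               + (M *v yr) \<bullet> p
               + dstar a b (M *v m)
               - 1/2 * qf M yd)
      else \<infinity>)"

text \<open>Objective of the p-subproblems (i) and (iii), given lt (lambda) and mt (mu).\<close>
definition Fp :: "real^'n^'n \<Rightarrow> real^'n^'n \<Rightarrow> real^'n \<Rightarrow> real^'n \<Rightarrow> real
    \<Rightarrow> real^'n \<Rightarrow> real^'n \<Rightarrow> real^'n \<Rightarrow> real" where
  "Fp K M yd yr \<alpha> lt mt p =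
     1/2 * qf (matrix_inv M) (K *v p - M *v yd) + 1/(2*\<alpha>) * qf M (p - lt - mt) + (M *v yr) \<bullet> p"

text \<open>The discrete sGS-mABCD iteration: lam, p, mu are the generated sequences
  (index 0 = initial point z^0); lt, pt, mt are the extrapolated points,
  ph the auxiliary p-hat iterates, t the momentum parameters.\<close>
definition sgs_mabcd :: "real^'n^'n \<Rightarrow> real^'n^'n \<Rightarrow> real^'n^'n \<Rightarrow> real \<Rightarrow> real^'n \<Rightarrow> real^'n
    \<Rightarrow> real \<Rightarrow> real \<Rightarrow> real \<Rightarrow> real
    \<Rightarrow> (nat \<Rightarrow> real^'n) \<Rightarrow> (nat \<Rightarrow> real^'n) \<Rightarrow> (nat \<Rightarrow> real^'n) \<Rightarrow> bool" where
  "sgs_mabcd K M W \<gamma> yd yr \<alpha> \<beta> a b lam p mu \<longleftrightarrow>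
    (\<exists>lt pt mt ph (t :: nat \<Rightarrow> real).
       lt 1 = lam 0 \<and> pt 1 = p 0 \<and> mt 1 = mu 0 \<and> t 1 = 1 \<and>
       (\<forall>k\<ge>1.
          (\<forall>q. Fp K M yd yr \<alpha> (lt k) (mt k) (ph k) \<le> Fp K M yd yr \<alpha> (lt k) (mt k) q) \<and>
          in_box \<beta> (lam k) \<and>
          (\<forall>l. in_box \<beta> l \<longrightarrow>
              1/(2*\<alpha>) * qf M (lam k - (ph k - mt k)) + 1/(2*\<alpha>) * qf (W - M) (lam k - lt k)
              \<le> 1/(2*\<alpha>) * qf M (l - (ph k - mt k)) + 1/(2*\<alpha>) * qf (W - M) (l - lt k)) \<and>
          (\<forall>q. Fp K M yd yr \<alpha> (lam k) (mt k) (p k) \<le> Fp K M yd yr \<alpha> (lam k) (mt k) q) \<and>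
          (\<forall>m. dstar a b (M *v mu k) + 1/(2*\<alpha>) * qf M (mu k - (p k - lam k))
                 + 1/(2*\<alpha>) * qf (\<gamma> *\<^sub>R (M ** matrix_inv W ** M) - M) (mu k - mt k)
               \<le> dstar a b (M *v m) + 1/(2*\<alpha>) * qf M (m - (p k - lam k))
                 + 1/(2*\<alpha>) * qf (\<gamma> *\<^sub>R (M ** matrix_inv W ** M) - M) (m - mt k)) \<and>
          t (k+1) = (1 + sqrt (1 + 4 * (t k)\<^sup>2)) / 2 \<and>
          lt (k+1) = lam k + ((t k - 1) / t (k+1)) *\<^sub>R (lam k - lam (k-1)) \<and>
          pt (k+1) = p k + ((t k - 1) / t (k+1)) *\<^sub>R (p k - p (k-1)) \<and>
          mt (k+1) = mu k + ((t k - 1) / t (k+1)) *\<^sub>R (mu k - mu (k-1))))"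

definition tau_h :: "real^'n^'n \<Rightarrow> real^'n^'n \<Rightarrow> real^'n^'n \<Rightarrow> real \<Rightarrow> real
    \<Rightarrow> real^'n \<Rightarrow> real^'n \<Rightarrow> real^'n \<Rightarrow> real^'n \<Rightarrow> real" where
  "tau_h K M W \<gamma> \<alpha> l0 m0 ls ms =
     (let G = M + \<alpha> *\<^sub>R (K ** matrix_inv M ** K) in
      1/2 * (1/\<alpha>) * (qf (M ** matrix_inv G ** M + W - M) (l0 - ls)
                       + qf (\<gamma> *\<^sub>R (M ** matrix_inv W ** M)) (m0 - ms)))"

end

theory Submission
  imports Defs
begin

text \<open>The sweep p^ -> lambda -> p -> mu is, by the symmetric Gauss-Seidel decomposition, one
  proximal step for Phi_h in the block-diagonal metric S_h (the p-block is solved exactly and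
  carries no proximal term).  This gives the descent inequality
  Phi_h(z) - Phi_h(z^k) >= 1/2 |z^k - z|_S^2 - 1/2 |z~^k - z|_S^2 for every feasible z, and the
  FISTA argument with t_k >= (k+1)/2 turns it into the O(1/k^2) bound.  The iterates then lie in
  a sublevel set of Phi_h, which is bounded because lambda lives in a box and Phi_h is coercive
  in p and in lambda + mu - p.\<close>

lemma matrix_inv_right: "invertible A \<Longrightarrow> A ** matrix_inv A = mat 1"
  and matrix_inv_left: "invertible A \<Longrightarrow> matrix_inv A ** A = mat 1"
  for A :: "real^'n^'n"
  unfolding invertible_def matrix_inv_def by (metis (mono_tags, lifting) someI_ex)+

lemma invertible_if_pos_def:
  fixes P :: "real^'n^'n"
  assumes "\<And>x. x \<noteq> 0 \<Longrightarrow> qf P x > 0"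
  shows "invertible P"
proof -
  have "\<forall>x. P *v x = 0 \<longrightarrow> x = 0"
    using assms unfolding qf_def by force
  thus ?thesis using matrix_left_invertible_ker invertible_left_inverse by blast
qed

lemma transpose_matrix_inv_sym:
  fixes A :: "real^'n^'n"
  assumes "transpose A = A" "invertible A"
  shows "transpose (matrix_inv A) = matrix_inv A"
proof -
  have "transpose (matrix_inv A) ** A = mat 1"
    by (metis assms matrix_inv_right matrix_transpose_mul transpose_mat)
  hence "transpose (matrix_inv A) = transpose (matrix_inv A) ** (A ** matrix_inv A)"
    using matrix_inv_right[OF assms(2)] by simp
  also have "\<dots> = matrix_inv A"
    by (simp add: matrix_mul_assoc \<open>transpose (matrix_inv A) ** A = mat 1\<close>)
  finally show ?thesis .
qed

lemma transpose_add: "transpose (P + Q) = transpose P + transpose (Q :: real^'n^'n)"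
  and transpose_diff: "transpose (P - Q) = transpose P - transpose (Q :: real^'n^'n)"
  by (simp_all add: transpose_def vec_eq_iff)

lemma transpose_mult_sandwich:
  "transpose P = P \<Longrightarrow> transpose Q = Q \<Longrightarrow> transpose (P ** Q ** P) = P ** Q ** (P :: real^'n^'n)"
  by (simp add: matrix_transpose_mul matrix_mul_assoc)

lemma inner_matrix_vector_sym:
  fixes P :: "real^'n^'n"
  assumes "transpose P = P"
  shows "x \<bullet> (P *v y) = y \<bullet> (P *v x)"
  by (metis assms dot_lmul_matrix inner_commute vector_transpose_matrix)

lemma qf_add:
  fixes P :: "real^'n^'n"
  assumes "transpose P = P"
  shows "qf P (x + y) = qf P x + 2 * (x \<bullet> (P *v y)) + qf P y"
  unfolding qf_def using inner_matrix_vector_sym[OF assms, of y x]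
  by (simp add: matrix_vector_right_distrib inner_add_left inner_add_right)

lemma qf_diff:
  fixes P :: "real^'n^'n"
  assumes "transpose P = P"
  shows "qf P (x - y) = qf P x - 2 * (x \<bullet> (P *v y)) + qf P y"
  unfolding qf_def using inner_matrix_vector_sym[OF assms, of y x]
  by (simp add: matrix_vector_mult_diff_distrib inner_diff_left inner_diff_right)

lemma qf_scaleR: "qf P (c *\<^sub>R x) = c^2 * qf P x"
  unfolding qf_def by (simp add: matrix_vector_mult_scaleR power2_eq_square)

lemma qf_uminus: "qf P (- x) = qf P x"
  using qf_scaleR[of P "-1" x] by simp

lemma qf_add_scaleR:
  fixes P :: "real^'n^'n"
  assumes "transpose P = P"
  shows "qf P (y + t *\<^sub>R d) = qf P y + 2 * t * (d \<bullet> (P *v y)) + t^2 * qf P d"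
  using qf_add[OF assms, of y "t *\<^sub>R d"] inner_matrix_vector_sym[OF assms, of y d]
  by (simp add: qf_scaleR matrix_vector_mult_scaleR)

lemma qf_mult_sandwich:
  fixes P Q :: "real^'n^'n"
  assumes "transpose P = P"
  shows "qf (P ** Q ** P) x = qf Q (P *v x)"
  unfolding qf_def
  by (simp add: matrix_vector_mul_assoc[symmetric] inner_matrix_vector_sym[OF assms, of x] inner_commute)

lemma qf_right_inverse:
  fixes P Q :: "real^'n^'n"
  assumes "P ** Q = mat 1"
  shows "qf Q w = qf P (Q *v w)"
proof -
  have "P *v (Q *v w) = w" by (simp add: matrix_vector_mul_assoc assms)
  hence "qf Q w = (P *v (Q *v w)) \<bullet> (Q *v w)" unfolding qf_def by simp
  thus ?thesis unfolding qf_def by (simp add: inner_commute)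
qed

lemma qf_nonneg_if_pos_def: "(\<And>x. x \<noteq> 0 \<Longrightarrow> qf P x > 0) \<Longrightarrow> qf P x \<ge> 0"
  by (cases "x = 0") (auto simp: qf_def intro: less_imp_le)

lemma qf_combination:
  "(T^2 - T) * (qf Q (x - a) - qf Q (x - b)) + T * (qf Q (y - a) - qf Q (y - b))
     = qf Q ((T - 1) *\<^sub>R x + y - T *\<^sub>R a) - qf Q ((T - 1) *\<^sub>R x + y - T *\<^sub>R b)"
  unfolding qf_def
  by (simp add: algebra_simps power2_eq_square)

lemma pos_def_qf_lower_bound:
  fixes P :: "real^'n^'n"
  assumes "\<And>x. x \<noteq> 0 \<Longrightarrow> qf P x > 0"
  obtains c where "c > 0" "\<And>x. c * (norm x)^2 \<le> qf P x"
proof -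
  have cont: "continuous_on (sphere 0 1) (qf P)" unfolding qf_def by (intro continuous_intros)
  obtain x0 where x0: "x0 \<in> sphere (0::real^'n) 1" "\<forall>y\<in>sphere 0 1. qf P x0 \<le> qf P y"
    using continuous_attains_inf[OF compact_sphere _ cont] by auto
  have "qf P x0 * (norm x)^2 \<le> qf P x" for x
  proof (cases "x = 0")
    case False
    hence "qf P x0 \<le> qf P ((1 / norm x) *\<^sub>R x)" using x0 by simp
    also have "\<dots> = qf P x / (norm x)^2" by (simp add: qf_scaleR power_divide)
    finally show ?thesis using False by (simp add: field_simps)
  qed (simp add: qf_def)
  moreover have "x0 \<noteq> 0" using x0(1) by auto
  hence "qf P x0 > 0" using assms by blast
  ultimately show thesis using that by blast
qed

lemma norm_le_if_quadratic_le:
  fixes c B C r :: real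
  assumes "c > 0" "r \<ge> 0" "c * r^2 - B * r \<le> C"
  shows "r \<le> max 1 ((\<bar>B\<bar> + \<bar>C\<bar>) / c)"
proof (rule ccontr)
  assume "\<not> ?thesis"
  hence r1: "r > 1" and "(\<bar>B\<bar> + \<bar>C\<bar>) / c < r" by auto
  hence "c * r > \<bar>B\<bar> + \<bar>C\<bar>" using assms(1) by (simp add: field_simps)
  hence "c * r * r > (\<bar>B\<bar> + \<bar>C\<bar>) * r" using r1 by (intro mult_strict_right_mono) auto
  moreover have "\<bar>C\<bar> \<le> \<bar>C\<bar> * r" using mult_left_mono[of 1 r "\<bar>C\<bar>"] r1 by simp
  moreover have "B * r \<le> \<bar>B\<bar> * r" using r1 by (simp add: mult_right_mono)
  ultimately show False using assms(3) by (simp add: power2_eq_square algebra_simps)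
qed

lemma qf_sublevel_bounded:
  fixes P :: "real^'n^'n"
  assumes "\<And>x. x \<noteq> 0 \<Longrightarrow> qf P x > 0"
  shows "bounded {x. qf P x + b \<bullet> x \<le> C}"
proof -
  obtain c where c: "c > 0" "\<And>x. c * (norm x)^2 \<le> qf P x"
    using pos_def_qf_lower_bound[OF assms] by blast
  have "norm x \<le> max 1 ((\<bar>norm b\<bar> + \<bar>C\<bar>) / c)" if "qf P x + b \<bullet> x \<le> C" for x
  proof (rule norm_le_if_quadratic_le[OF c(1) norm_ge_zero])
    show "c * (norm x)^2 - norm b * norm x \<le> C"
      using that c(2)[of x] norm_cauchy_schwarz[of "- b" x] by simp
  qed
  thus ?thesis unfolding bounded_iff by blast
qed

lemma nonneg_if_linear_plus_quadratic_nonneg: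
  fixes c e :: real
  assumes "\<And>t. 0 < t \<Longrightarrow> t \<le> 1 \<Longrightarrow> 0 \<le> t * c + t^2 * e"
  shows "0 \<le> c"
proof (rule ccontr)
  assume c: "\<not> 0 \<le> c"
  define t where "t = min 1 (- c / (2 * (\<bar>e\<bar> + 1)))"
  have "0 < - c / (2 * (\<bar>e\<bar> + 1))" using c by (intro divide_pos_pos) auto
  hence t: "0 < t" "t \<le> 1" by (auto simp: t_def)
  have "0 \<le> t * (c + t * e)" using assms[OF t] by (simp add: power2_eq_square algebra_simps)
  hence "0 \<le> c + t * e" using t by (simp add: zero_le_mult_iff)
  moreover have "t * \<bar>e\<bar> \<le> (- c / (2 * (\<bar>e\<bar> + 1))) * \<bar>e\<bar>"
    by (rule mult_right_mono) (auto simp: t_def)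
  moreover have "(- c / (2 * (\<bar>e\<bar> + 1))) * \<bar>e\<bar> \<le> - c / 2"
    using c by (simp add: field_simps)
  moreover have "t * e \<le> t * \<bar>e\<bar>" using t by (simp add: mult_left_mono)
  ultimately show False using c by linarith
qed

lemma prox_variational_inequality:
  fixes P Q :: "real^'n^'n" and h :: "real^'n \<Rightarrow> real"
  assumes h: "convex_on S h" and P: "transpose P = P" and Q: "transpose Q = Q" and c: "c > 0"
    and x: "x \<in> S" and y: "y \<in> S"
    and min: "\<And>z. z \<in> S \<Longrightarrow> h x + c * qf P (x - u) + c * qf Q (x - v)
                              \<le> h z + c * qf P (z - u) + c * qf Q (z - v)"
  shows "0 \<le> h y - h x + 2 * c * ((y - x) \<bullet> (P *v (x - u)) + (y - x) \<bullet> (Q *v (x - v)))"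
proof -
  define d where "d = y - x"
  define gP where "gP = P *v (x - u)"
  define gQ where "gQ = Q *v (x - v)"
  have "0 \<le> t * (h y - h x + 2 * c * (d \<bullet> gP + d \<bullet> gQ)) + t^2 * (c * qf P d + c * qf Q d)"
    if t: "0 < t" "t \<le> 1" for t
  proof -
    have z: "x + t *\<^sub>R d = (1 - t) *\<^sub>R x + t *\<^sub>R y" by (simp add: d_def algebra_simps)
    have "x + t *\<^sub>R d \<in> S"
      unfolding z using convex_on_imp_convex[OF h] x y t by (simp add: convexD)
    from min[OF this] have "h x + c * qf P (x - u) + c * qf Q (x - v)
        \<le> h (x + t *\<^sub>R d) + c * (qf P (x - u) + 2 * t * (d \<bullet> gP) + t^2 * qf P d)
          + c * (qf Q (x - v) + 2 * t * (d \<bullet> gQ) + t^2 * qf Q d)"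
      using qf_add_scaleR[OF P, of "x - u" t d] qf_add_scaleR[OF Q, of "x - v" t d]
      by (simp add: gP_def gQ_def diff_add_eq)
    moreover have "h (x + t *\<^sub>R d) \<le> (1 - t) * h x + t * h y"
      unfolding z using convex_onD[OF h] x y t by simp
    ultimately show ?thesis by (simp add: algebra_simps)
  qed
  thus ?thesis unfolding d_def gP_def gQ_def by (rule nonneg_if_linear_plus_quadratic_nonneg)
qed

lemma convex_box_set: "convex {l. in_box \<beta> l}"
  using convex_box_cart[of "\<lambda>_ r. - \<beta> \<le> r \<and> r \<le> \<beta>"]
  by (simp add: in_box_def convex_real_interval(5)[of "- \<beta>" \<beta>, unfolded atLeastAtMost_def atLeast_def atMost_def, simplified Collect_conj_eq[symmetric]])

lemma dstar_nonneg: "a \<le> 0 \<Longrightarrow> 0 \<le> b \<Longrightarrow> 0 \<le> dstar a b x"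
  unfolding dstar_def
  by (rule sum_nonneg) (metis max.coboundedI1 max.coboundedI2 mult_nonneg_nonneg mult_nonpos_nonpos linear)

lemma convex_on_dstar_matrix_vector:
  fixes A :: "real^'n^'m"
  shows "convex_on UNIV (\<lambda>x. dstar a b (A *v x))"
proof (rule convex_onI)
  fix t :: real and x y :: "real^'n"
  assume t: "0 < t" "t < 1"
  have "max (a * (A *v ((1 - t) *\<^sub>R x + t *\<^sub>R y)) $ i) (b * (A *v ((1 - t) *\<^sub>R x + t *\<^sub>R y)) $ i)
     \<le> (1 - t) * max (a * (A *v x) $ i) (b * (A *v x) $ i) + t * max (a * (A *v y) $ i) (b * (A *v y) $ i)"
    for i
  proof -
    have lin: "e * (A *v ((1 - t) *\<^sub>R x + t *\<^sub>R y)) $ i = (1 - t) * (e * (A *v x) $ i) + t * (e * (A *v y) $ i)"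
      for e by (simp add: algebra_simps)
    show ?thesis
      unfolding lin using t
      by (intro max.boundedI add_mono mult_left_mono) auto
  qed
  hence "dstar a b (A *v ((1 - t) *\<^sub>R x + t *\<^sub>R y))
      \<le> (\<Sum>i\<in>UNIV. (1 - t) * max (a * (A *v x) $ i) (b * (A *v x) $ i) + t * max (a * (A *v y) $ i) (b * (A *v y) $ i))"
    unfolding dstar_def by (rule sum_mono)
  thus "dstar a b (A *v ((1 - t) *\<^sub>R x + t *\<^sub>R y)) \<le> (1 - t) * dstar a b (A *v x) + t * dstar a b (A *v y)"
    unfolding dstar_def by (simp add: sum.distrib sum_distrib_left)
qed simp

lemma fista_momentum_lower_bound:
  fixes t :: "nat \<Rightarrow> real"
  assumes "t 1 = 1" and "\<And>k. k \<ge> 1 \<Longrightarrow> t (k + 1) = (1 + sqrt (1 + 4 * (t k)^2)) / 2"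
  shows "k \<ge> 1 \<Longrightarrow> (real k + 1) / 2 \<le> t k"
proof (induction k rule: dec_induct)
  case (step n)
  have "2 * t n = sqrt (4 * (t n)^2)" using step.IH by (simp add: real_sqrt_mult)
  also have "\<dots> \<le> sqrt (1 + 4 * (t n)^2)" by simp
  finally show ?case using assms(2)[OF step.hyps(1)] step.IH by simp
qed (use assms(1) in simp)

lemma fista_momentum_sq:
  fixes s t :: real
  assumes "s = (1 + sqrt (1 + 4 * t^2)) / 2"
  shows "s^2 = t^2 + s"
proof -
  have "2 * s - 1 = sqrt (1 + 4 * t^2)" using assms by simp
  hence "(2 * s - 1)^2 = 1 + 4 * t^2" by simp
  thus ?thesis by (simp add: power2_eq_square algebra_simps)
qed

lemma norm_le_if_in_box: "in_box \<beta> l \<Longrightarrow> norm l \<le> real CARD('n) * \<beta>"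
  for l :: "real^'n"
proof -
  assume "in_box \<beta> l"
  hence "\<bar>l $ i\<bar> \<le> \<beta>" for i unfolding in_box_def by (metis abs_le_iff minus_le_iff)
  hence "(\<Sum>i\<in>UNIV. \<bar>l $ i\<bar>) \<le> real CARD('n) * \<beta>"
    using sum_mono[of UNIV "\<lambda>i. \<bar>l $ i\<bar>" "\<lambda>_. \<beta>"] by simp
  thus ?thesis using norm_le_l1_cart[of l] by linarith
qed

lemma rate_from_momentum:
  fixes t x \<tau> :: real
  assumes "t^2 * x \<le> \<tau>" "(real k + 1) / 2 \<le> t" "0 \<le> \<tau>"
  shows "x \<le> 4 * \<tau> / (real k + 1)^2"
proof (cases "x \<le> 0")
  case False
  have "((real k + 1) / 2)^2 \<le> t^2" using assms(2) by (intro power_mono) auto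
  hence "((real k + 1) / 2)^2 * x \<le> t^2 * x" using False by (simp add: mult_right_mono)
  hence "((real k + 1) / 2)^2 * x \<le> \<tau>" using assms(1) by linarith
  thus ?thesis by (simp add: field_simps)
next
  case True
  moreover have "0 \<le> 4 * \<tau> / (real k + 1)^2" using assms(3) by simp
  ultimately show ?thesis by linarith
qed

locale sgs_setting =
  fixes K M W :: "real^'n^'n" and yd yr :: "real^'n" and \<alpha> \<beta> a b \<gamma> :: real
  assumes K_sym: "transpose K = K" and K_pd: "\<And>x. x \<noteq> 0 \<Longrightarrow> qf K x > 0"
    and M_sym: "transpose M = M" and M_pd: "\<And>x. x \<noteq> 0 \<Longrightarrow> qf M x > 0"
    and W_sym: "transpose W = W"
    and M_le_W: "\<And>z. qf M z \<le> qf W z" and W_le_M: "\<And>z. qf W z \<le> \<gamma> * qf M z"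
    and a_nonpos: "a \<le> 0" and b_nonneg: "0 \<le> b" and alpha_pos: "\<alpha> > 0" and gamma_pos: "\<gamma> > 0"
begin

definition "Minv = matrix_inv M"
definition "Winv = matrix_inv W"
definition "G = M + \<alpha> *\<^sub>R (K ** Minv ** K)"
definition "Ginv = matrix_inv G"
definition "S_lam = M ** Ginv ** M + W - M"
definition "S_mu = \<gamma> *\<^sub>R (M ** Winv ** M)"
definition "D_mu = S_mu - M"

definition "Phi_fin l p m = 1/2 * qf Minv (K *v p - M *v yd) + 1/(2*\<alpha>) * qf M (l + m - p)
               + (M *v yr) \<bullet> p + dstar a b (M *v m) - 1/2 * qf M yd"

definition "half_Snorm l m = 1/2 * (1/\<alpha>) * (qf S_lam l + qf S_mu m)"

definition "grad_p lt mt q = K *v (Minv *v (K *v q - M *v yd)) + (1/\<alpha>) *\<^sub>R (M *v (q - lt - mt)) + M *v yr"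

definition "sgs_step lt mt lam p mu \<longleftrightarrow> (\<exists>ph.
          (\<forall>q. Fp K M yd yr \<alpha> lt mt ph \<le> Fp K M yd yr \<alpha> lt mt q) \<and>
          in_box \<beta> lam \<and>
          (\<forall>l. in_box \<beta> l \<longrightarrow>
              1/(2*\<alpha>) * qf M (lam - (ph - mt)) + 1/(2*\<alpha>) * qf (W - M) (lam - lt)
              \<le> 1/(2*\<alpha>) * qf M (l - (ph - mt)) + 1/(2*\<alpha>) * qf (W - M) (l - lt)) \<and>
          (\<forall>q. Fp K M yd yr \<alpha> lam mt p \<le> Fp K M yd yr \<alpha> lam mt q) \<and>
          (\<forall>m. dstar a b (M *v mu) + 1/(2*\<alpha>) * qf M (mu - (p - lam))
                 + 1/(2*\<alpha>) * qf (\<gamma> *\<^sub>R (M ** matrix_inv W ** M) - M) (mu - mt)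
               \<le> dstar a b (M *v m) + 1/(2*\<alpha>) * qf M (m - (p - lam))
                 + 1/(2*\<alpha>) * qf (\<gamma> *\<^sub>R (M ** matrix_inv W ** M) - M) (m - mt)))"

lemma qf_M_nonneg: "qf M x \<ge> 0"
  by (rule qf_nonneg_if_pos_def[OF M_pd])

lemma M_Minv: "M ** Minv = mat 1"
  unfolding Minv_def by (rule matrix_inv_right[OF invertible_if_pos_def[OF M_pd]])

lemma Minv_sym: "transpose Minv = Minv"
  unfolding Minv_def by (rule transpose_matrix_inv_sym[OF M_sym invertible_if_pos_def[OF M_pd]])

lemma qf_Minv_pos: "x \<noteq> 0 \<Longrightarrow> qf Minv x > 0"
  using M_pd[of "Minv *v x"] qf_right_inverse[OF M_Minv, of x] M_Minv
  by (metis matrix_vector_mul_assoc matrix_vector_mul_lid matrix_vector_mult_0_right)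

lemma qf_Minv_nonneg: "qf Minv x \<ge> 0"
  by (rule qf_nonneg_if_pos_def[OF qf_Minv_pos])

lemma W_pd: "x \<noteq> 0 \<Longrightarrow> qf W x > 0"
  using M_le_W[of x] M_pd[of x] by simp

lemma W_Winv: "W ** Winv = mat 1"
  unfolding Winv_def by (rule matrix_inv_right[OF invertible_if_pos_def[OF W_pd]])

lemma Winv_sym: "transpose Winv = Winv"
  unfolding Winv_def by (rule transpose_matrix_inv_sym[OF W_sym invertible_if_pos_def[OF W_pd]])

lemma G_sym: "transpose G = G"
  unfolding G_def by (simp add: transpose_add transpose_scalar transpose_mult_sandwich K_sym Minv_sym M_sym)

lemma qf_G: "qf G x = qf M x + \<alpha> * qf Minv (K *v x)"
  unfolding G_def
  by (simp add: qf_def algebra_simps qf_mult_sandwich[OF K_sym, unfolded qf_def] scaleR_matrix_vector_assoc[symmetric])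

lemma G_pd: "x \<noteq> 0 \<Longrightarrow> qf G x > 0"
  using qf_G[of x] M_pd[of x] qf_Minv_nonneg[of "K *v x"] alpha_pos by (simp add: add_pos_nonneg)

lemma G_Ginv: "G ** Ginv = mat 1" "Ginv ** G = mat 1"
  unfolding Ginv_def using invertible_if_pos_def[OF G_pd] by (simp_all add: matrix_inv_right matrix_inv_left)

lemma Ginv_sym: "transpose Ginv = Ginv"
  unfolding Ginv_def by (rule transpose_matrix_inv_sym[OF G_sym invertible_if_pos_def[OF G_pd]])

lemma S_lam_sym: "transpose S_lam = S_lam"
  unfolding S_lam_def by (simp add: transpose_add transpose_diff transpose_mult_sandwich Ginv_sym M_sym W_sym)

lemma qf_S_lam_nonneg: "qf S_lam x \<ge> 0"
proof -
  have "qf S_lam x = qf Ginv (M *v x) + (qf W x - qf M x)"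
    unfolding S_lam_def by (simp add: qf_def algebra_simps qf_mult_sandwich[OF M_sym, unfolded qf_def])
  thus ?thesis
    using qf_nonneg_if_pos_def[OF G_pd] qf_right_inverse[OF G_Ginv(1)] M_le_W[of x]
    by (metis add_nonneg_nonneg diff_ge_0_iff_ge)
qed

lemma S_mu_sym: "transpose S_mu = S_mu"
  unfolding S_mu_def by (simp add: transpose_scalar transpose_mult_sandwich Winv_sym M_sym)

lemma D_mu_sym: "transpose D_mu = D_mu"
  unfolding D_mu_def by (simp add: transpose_diff S_mu_sym M_sym)

lemma qf_S_mu: "qf S_mu x = \<gamma> * qf Winv (M *v x)"
  unfolding S_mu_def
  by (simp add: qf_def scaleR_matrix_vector_assoc[symmetric] qf_mult_sandwich[OF M_sym, unfolded qf_def])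

lemma qf_D_mu: "qf D_mu x = qf S_mu x - qf M x"
  unfolding D_mu_def by (simp add: qf_def algebra_simps)

text \<open>Expanding 0 <= |W^-1 M z - z/gamma|_W^2 and using W <= gamma M gives M <= gamma M W^-1 M.\<close>
lemma qf_D_mu_nonneg: "qf D_mu z \<ge> 0"
proof -
  define v where "v = Winv *v (M *v z)"
  define c where "c = 1 / \<gamma>"
  have Wv: "W *v v = M *v z" unfolding v_def by (simp add: matrix_vector_mul_assoc matrix_mul_assoc W_Winv)
  have "0 \<le> qf W (v - c *\<^sub>R z)" using qf_nonneg_if_pos_def[OF W_pd] .
  also have "\<dots> = qf W v - 2 * (v \<bullet> (W *v (c *\<^sub>R z))) + c^2 * qf W z"
    by (simp add: qf_diff[OF W_sym] qf_scaleR)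
  also have "v \<bullet> (W *v (c *\<^sub>R z)) = c * qf M z"
    by (simp add: matrix_vector_mult_scaleR inner_matrix_vector_sym[OF W_sym, of v] Wv qf_def)
  also have "qf W v = qf Winv (M *v z)"
    unfolding qf_def Wv by (simp add: v_def inner_commute)
  also have "c^2 * qf W z \<le> c^2 * (\<gamma> * qf M z)" by (rule mult_left_mono[OF W_le_M]) simp
  also have "c^2 * (\<gamma> * qf M z) = c * qf M z" using gamma_pos by (simp add: c_def power2_eq_square)
  finally have "0 \<le> \<gamma> * (qf Winv (M *v z) - c * qf M z)" using gamma_pos by simp
  hence "0 \<le> \<gamma> * qf Winv (M *v z) - qf M z" using gamma_pos by (simp add: c_def algebra_simps)
  thus ?thesis by (simp add: qf_D_mu qf_S_mu)
qed

lemma qf_S_mu_nonneg: "qf S_mu x \<ge> 0"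
  using qf_D_mu_nonneg[of x] qf_M_nonneg[of x] by (simp add: qf_D_mu)

lemma half_Snorm_nonneg: "half_Snorm l m \<ge> 0"
  using qf_S_lam_nonneg[of l] qf_S_mu_nonneg[of m] alpha_pos by (simp add: half_Snorm_def)

lemma inner_grad_p:
  "d \<bullet> grad_p lt mt q = (K *v d) \<bullet> (Minv *v (K *v q - M *v yd))
      + (1/\<alpha>) * (d \<bullet> (M *v (q - lt - mt))) + (M *v yr) \<bullet> d"
  unfolding grad_p_def
  using inner_matrix_vector_sym[OF K_sym, of d "Minv *v (K *v q - M *v yd)"]
  by (simp add: inner_add_right inner_commute)

lemma Fp_add_scaleR:
  "Fp K M yd yr \<alpha> lt mt (q + t *\<^sub>R d) = Fp K M yd yr \<alpha> lt mt q + t * (d \<bullet> grad_p lt mt q)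
     + t^2 * (1/2 * qf Minv (K *v d) + 1/(2*\<alpha>) * qf M d)"
proof -
  have e1: "K *v (q + t *\<^sub>R d) - M *v yd = (K *v q - M *v yd) + t *\<^sub>R (K *v d)"
    by (simp add: algebra_simps)
  have e2: "q + t *\<^sub>R d - lt - mt = (q - lt - mt) + t *\<^sub>R d" by simp
  have e3: "(M *v yr) \<bullet> (q + t *\<^sub>R d) = (M *v yr) \<bullet> q + t * ((M *v yr) \<bullet> d)"
    by (simp add: inner_add_right)
  show ?thesis
    unfolding Fp_def Minv_def[symmetric] e1 e2 e3 qf_add_scaleR[OF Minv_sym] qf_add_scaleR[OF M_sym] inner_grad_p
    using alpha_pos by (simp add: field_simps)
qed

lemma grad_p_zero_if_minimal:
  assumes "\<forall>q. Fp K M yd yr \<alpha> lt mt q0 \<le> Fp K M yd yr \<alpha> lt mt q"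
  shows "grad_p lt mt q0 = 0"
proof -
  let ?g = "grad_p lt mt q0"
  have "0 \<le> (- ?g) \<bullet> ?g"
  proof (rule nonneg_if_linear_plus_quadratic_nonneg)
    fix t :: real
    show "0 \<le> t * ((- ?g) \<bullet> ?g) + t^2 * (1/2 * qf Minv (K *v - ?g) + 1/(2*\<alpha>) * qf M (- ?g))"
      using spec[OF assms, of "q0 + t *\<^sub>R - ?g"] Fp_add_scaleR[of lt mt q0 t "- ?g"] by linarith
  qed
  thus ?thesis using inner_eq_zero_iff[of ?g] inner_ge_zero[of ?g] by simp
qed

text \<open>This correction of the predictor p^ is what produces the term M G^-1 M in the
  lambda-block of S_h.\<close>
lemma p_hat_correction:
  assumes "grad_p lt mt ph = 0" and "grad_p lam mt p = 0"
  shows "ph - p = Ginv *v (M *v (lt - lam))"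
proof -
  have "G *v (ph - p) - M *v (lt - lam) = \<alpha> *\<^sub>R (grad_p lt mt ph - grad_p lam mt p)"
    unfolding G_def grad_p_def using alpha_pos
    by (simp add: algebra_simps scaleR_matrix_vector_assoc[symmetric] matrix_vector_mul_assoc[symmetric])
  hence "G *v (ph - p) = M *v (lt - lam)" using assms by simp
  thus ?thesis by (metis G_Ginv(2) matrix_vector_mul_assoc matrix_vector_mul_lid)
qed

lemma lambda_step_vi:
  assumes "in_box \<beta> lam" and "in_box \<beta> l"
    and "\<forall>l. in_box \<beta> l \<longrightarrow>
              1/(2*\<alpha>) * qf M (lam - (ph - mt)) + 1/(2*\<alpha>) * qf (W - M) (lam - lt)
              \<le> 1/(2*\<alpha>) * qf M (l - (ph - mt)) + 1/(2*\<alpha>) * qf (W - M) (l - lt)"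
  shows "0 \<le> (l - lam) \<bullet> (M *v (lam - (ph - mt))) + (l - lam) \<bullet> ((W - M) *v (lam - lt))"
proof -
  have "0 \<le> 0 - 0 + 2 * (1/(2*\<alpha>)) * ((l - lam) \<bullet> (M *v (lam - (ph - mt))) + (l - lam) \<bullet> ((W - M) *v (lam - lt)))"
    by (rule prox_variational_inequality[where S = "{l. in_box \<beta> l}" and h = "\<lambda>_. 0"])
      (use assms alpha_pos in \<open>auto simp: convex_on_const convex_box_set transpose_diff M_sym W_sym\<close>)
  thus ?thesis using alpha_pos by (simp add: zero_le_divide_iff)
qed

lemma mu_step_vi:
  assumes "\<forall>m. dstar a b (M *v mu) + 1/(2*\<alpha>) * qf M (mu - (p - lam))
                 + 1/(2*\<alpha>) * qf (\<gamma> *\<^sub>R (M ** matrix_inv W ** M) - M) (mu - mt)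
               \<le> dstar a b (M *v m) + 1/(2*\<alpha>) * qf M (m - (p - lam))
                 + 1/(2*\<alpha>) * qf (\<gamma> *\<^sub>R (M ** matrix_inv W ** M) - M) (m - mt)"
  shows "0 \<le> dstar a b (M *v m) - dstar a b (M *v mu)
     + (1/\<alpha>) * ((m - mu) \<bullet> (M *v (mu - (p - lam))) + (m - mu) \<bullet> (D_mu *v (mu - mt)))"
proof -
  have "\<gamma> *\<^sub>R (M ** matrix_inv W ** M) - M = D_mu" by (simp add: D_mu_def S_mu_def Winv_def)
  thus ?thesis
    using prox_variational_inequality[OF convex_on_dstar_matrix_vector[of a b M] M_sym D_mu_sym,
        where c = "1/(2*\<alpha>)" and x = mu and y = m and u = "p - lam" and v = mt] assms alpha_pos
    by (simp add: add.assoc)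
qed

lemma sgs_step_optimality:
  assumes "sgs_step lt mt lam pk mu"
  shows "in_box \<beta> lam"
    and "(K *v d) \<bullet> (Minv *v (K *v pk - M *v yd)) + (M *v yr) \<bullet> d
           = (1/\<alpha>) * (d \<bullet> (M *v (lam + mu - pk)) - d \<bullet> (M *v (mu - mt)))"
    and "in_box \<beta> l \<Longrightarrow> 0 \<le> (l - lam) \<bullet> (M *v (lam + mu - pk)) - (l - lam) \<bullet> (M *v (mu - mt))
           + (l - lam) \<bullet> (S_lam *v (lam - lt))"
    and "0 \<le> dstar a b (M *v m) - dstar a b (M *v mu)
           + (1/\<alpha>) * ((m - mu) \<bullet> (M *v (lam + mu - pk)) + (m - mu) \<bullet> (D_mu *v (mu - mt)))"
proof -
  obtain ph where ph_opt: "\<forall>q. Fp K M yd yr \<alpha> lt mt ph \<le> Fp K M yd yr \<alpha> lt mt q"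
    and lam_box: "in_box \<beta> lam"
    and lam_opt: "\<forall>l. in_box \<beta> l \<longrightarrow>
              1/(2*\<alpha>) * qf M (lam - (ph - mt)) + 1/(2*\<alpha>) * qf (W - M) (lam - lt)
              \<le> 1/(2*\<alpha>) * qf M (l - (ph - mt)) + 1/(2*\<alpha>) * qf (W - M) (l - lt)"
    and p_opt: "\<forall>q. Fp K M yd yr \<alpha> lam mt pk \<le> Fp K M yd yr \<alpha> lam mt q"
    and mu_opt: "\<forall>m. dstar a b (M *v mu) + 1/(2*\<alpha>) * qf M (mu - (pk - lam))
                 + 1/(2*\<alpha>) * qf (\<gamma> *\<^sub>R (M ** matrix_inv W ** M) - M) (mu - mt)
               \<le> dstar a b (M *v m) + 1/(2*\<alpha>) * qf M (m - (pk - lam))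
                 + 1/(2*\<alpha>) * qf (\<gamma> *\<^sub>R (M ** matrix_inv W ** M) - M) (m - mt)"
    using assms unfolding sgs_step_def by blast
  have grad_pk: "grad_p lam mt pk = 0" by (rule grad_p_zero_if_minimal[OF p_opt])
  show "in_box \<beta> lam" by (rule lam_box)
  have "pk - lam - mt = (mu - mt) - (lam + mu - pk)" by (simp add: algebra_simps)
  moreover have "d \<bullet> grad_p lam mt pk = 0" using grad_pk by simp
  ultimately show "(K *v d) \<bullet> (Minv *v (K *v pk - M *v yd)) + (M *v yr) \<bullet> d
           = (1/\<alpha>) * (d \<bullet> (M *v (lam + mu - pk)) - d \<bullet> (M *v (mu - mt)))"
    unfolding inner_grad_p by (simp add: algebra_simps)
  show "0 \<le> (l - lam) \<bullet> (M *v (lam + mu - pk)) - (l - lam) \<bullet> (M *v (mu - mt))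
           + (l - lam) \<bullet> (S_lam *v (lam - lt))" if l_box: "in_box \<beta> l"
  proof -
    have ph_pk: "ph - pk = Ginv *v (M *v (lt - lam))"
      by (rule p_hat_correction[OF grad_p_zero_if_minimal[OF ph_opt] grad_pk])
    have "lam - (ph - mt) = (lam + mu - pk) - (mu - mt) - (ph - pk)" by (simp add: algebra_simps)
    moreover have "(l - lam) \<bullet> (M *v (ph - pk)) = - ((l - lam) \<bullet> ((M ** Ginv ** M) *v (lam - lt)))"
      unfolding ph_pk by (simp add: matrix_vector_mul_assoc[symmetric] algebra_simps)
    ultimately show ?thesis
      using lambda_step_vi[OF lam_box l_box lam_opt]
      by (simp add: S_lam_def matrix_vector_mult_diff_distrib matrix_vector_right_distrib matrix_vector_mult_add_rdistrib
          matrix_vector_mult_diff_rdistrib inner_diff_right inner_add_right)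
  qed
  have v: "mu - (pk - lam) = lam + mu - pk" by (simp add: algebra_simps)
  show "0 \<le> dstar a b (M *v m) - dstar a b (M *v mu)
           + (1/\<alpha>) * ((m - mu) \<bullet> (M *v (lam + mu - pk)) + (m - mu) \<bullet> (D_mu *v (mu - mt)))"
    using mu_step_vi[OF mu_opt, of m] unfolding v .
qed

lemma Phi_fin_diff:
  "Phi_fin l q m - Phi_fin lam pk mu
     = (K *v (q - pk)) \<bullet> (Minv *v (K *v pk - M *v yd)) + qf Minv (K *v (q - pk)) / 2
       + (1/\<alpha>) * ((lam + mu - pk) \<bullet> (M *v ((l - lam) + (m - mu) - (q - pk))))
       + 1/(2*\<alpha>) * qf M ((l - lam) + (m - mu) - (q - pk))
       + (M *v yr) \<bullet> (q - pk) + dstar a b (M *v m) - dstar a b (M *v mu)"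
proof -
  have v1: "K *v q - M *v yd = (K *v pk - M *v yd) + K *v (q - pk)" by (simp add: algebra_simps)
  have v2: "l + m - q = (lam + mu - pk) + ((l - lam) + (m - mu) - (q - pk))" by (simp add: algebra_simps)
  have v3: "(M *v yr) \<bullet> q = (M *v yr) \<bullet> pk + (M *v yr) \<bullet> (q - pk)" by (simp add: inner_diff_right)
  have x1: "(K *v pk - M *v yd) \<bullet> (Minv *v (K *v (q - pk))) = (K *v (q - pk)) \<bullet> (Minv *v (K *v pk - M *v yd))"
    using inner_matrix_vector_sym[OF Minv_sym] by (simp add: inner_commute)
  show ?thesis
    unfolding Phi_fin_def v1 v2 v3 qf_add[OF Minv_sym] qf_add[OF M_sym] x1
    using alpha_pos by (simp add: field_simps)
qed

lemma half_Snorm_add: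
  "half_Snorm (x + e) (y + f) = half_Snorm x y + (1/\<alpha>) * (x \<bullet> (S_lam *v e) + y \<bullet> (S_mu *v f)) + half_Snorm e f"
  unfolding half_Snorm_def qf_add[OF S_lam_sym] qf_add[OF S_mu_sym] using alpha_pos by (simp add: field_simps)

text \<open>Adding the optimality conditions of the four subproblems leaves the slack
  1/2 |K dq|_(M^-1)^2 + 1/(2 alpha) (|el|_(S_lam)^2 + |em|_(D_mu)^2 + |dl + dm - dq + em|_M^2) >= 0.\<close>
lemma descent_inequality:
  assumes step: "sgs_step lt mt lam pk mu" and l_box: "in_box \<beta> l"
  shows "half_Snorm (l - lam) (m - mu) - half_Snorm (l - lt) (m - mt) \<le> Phi_fin l q m - Phi_fin lam pk mu"
proof -
  note opt = sgs_step_optimality[OF step]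
  define dl where "dl = l - lam"
  define dq where "dq = q - pk"
  define dm where "dm = m - mu"
  define el where "el = lam - lt"
  define em where "em = mu - mt"
  define r where "r = lam + mu - pk"
  define i where "i = 1 / \<alpha>"
  have i_pos: "i > 0" using alpha_pos by (simp add: i_def)
  define X where "X = (K *v dq) \<bullet> (Minv *v (K *v pk - M *v yd))"
  define Y where "Y = (M *v yr) \<bullet> dq"
  define S where "S = dstar a b (M *v m) - dstar a b (M *v mu)"
  define al where "al = dl \<bullet> (M *v r)"
  define am where "am = dm \<bullet> (M *v r)"
  define aq where "aq = dq \<bullet> (M *v r)"
  define bl where "bl = dl \<bullet> (M *v em)"
  define bm where "bm = dm \<bullet> (M *v em)"
  define bq where "bq = dq \<bullet> (M *v em)"
  define sl where "sl = dl \<bullet> (S_lam *v el)"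
  define dD where "dD = dm \<bullet> (D_mu *v em)"
  define QM where "QM = qf M (dl + dm - dq)"
  have p_eq: "X + Y = i * (aq - bq)"
    using opt(2)[of dq] unfolding X_def Y_def i_def aq_def bq_def r_def em_def by simp
  have lam_ineq: "0 \<le> al - bl + sl"
    using opt(3)[OF l_box] unfolding al_def bl_def sl_def dl_def r_def em_def el_def .
  have mu_ineq: "0 \<le> S + i * (am + dD)"
    using opt(4)[of m] unfolding S_def i_def am_def dD_def dm_def r_def em_def .
  have "r \<bullet> (M *v (dl + dm - dq)) = al + am - aq"
    unfolding al_def am_def aq_def using inner_matrix_vector_sym[OF M_sym, of r]
    by (simp add: inner_add_left inner_diff_left)
  hence Phi_diff: "Phi_fin l q m - Phi_fin lam pk mu
      = X + qf Minv (K *v dq) / 2 + i * (al + am - aq) + i/2 * QM + Y + S"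
    using Phi_fin_diff[of l q m lam pk mu] alpha_pos
    unfolding dl_def[symmetric] dq_def[symmetric] dm_def[symmetric] r_def[symmetric]
    by (simp add: X_def Y_def S_def QM_def i_def)
  have "dm \<bullet> (S_mu *v em) = dD + bm"
    unfolding dD_def bm_def D_mu_def by (simp add: algebra_simps)
  hence Snorm_diff: "half_Snorm dl dm - half_Snorm (l - lt) (m - mt)
      = - i * (sl + dD + bm) - i/2 * (qf S_lam el + qf D_mu em + qf M em)"
    using half_Snorm_add[of dl el dm em] alpha_pos
    unfolding dl_def dm_def el_def em_def
    by (simp add: half_Snorm_def qf_D_mu sl_def i_def dl_def dm_def el_def em_def field_simps)
  have "(dl + dm - dq) \<bullet> (M *v em) = bl + bm - bq"
    by (simp add: bl_def bm_def bq_def inner_add_left inner_diff_left)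
  hence square: "0 \<le> QM + 2 * (bl + bm - bq) + qf M em"
    using qf_M_nonneg[of "(dl + dm - dq) + em"] unfolding qf_add[OF M_sym] QM_def by simp
  have "0 \<le> i/2 * ((QM + 2 * (bl + bm - bq) + qf M em) + qf S_lam el + qf D_mu em)"
    using i_pos square qf_S_lam_nonneg[of el] qf_D_mu_nonneg[of em] by simp
  moreover have "0 \<le> i * (al - bl + sl)" using i_pos lam_ineq by simp
  ultimately show ?thesis
    using Phi_diff Snorm_diff p_eq mu_ineq qf_Minv_nonneg[of "K *v dq"]
    unfolding dl_def dm_def by (simp add: algebra_simps)
qed

lemma Phi_fin_sublevel_bounded: "bounded {(l, q, m). in_box \<beta> l \<and> Phi_fin l q m \<le> C}"
proof -
  define v where "v = K *v (Minv *v (M *v yd))"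
  have KMK_pd: "qf (K ** Minv ** K) x > 0" if "x \<noteq> 0" for x
  proof -
    have "K *v x \<noteq> 0" using K_pd[OF that] by (auto simp: qf_def)
    thus ?thesis using qf_Minv_pos by (simp add: qf_mult_sandwich[OF K_sym])
  qed
  have split: "qf Minv (K *v q - M *v yd) = qf (K ** Minv ** K) q - 2 * (q \<bullet> v) + qf Minv (M *v yd)" for q
    unfolding qf_diff[OF Minv_sym] qf_mult_sandwich[OF K_sym] v_def
    using inner_matrix_vector_sym[OF K_sym, of q "Minv *v (M *v yd)"] by (simp add: inner_commute)
  have lower: "1/2 * qf Minv (K *v q - M *v yd) + (M *v yr) \<bullet> q \<le> Phi_fin l q m + 1/2 * qf M yd"
    and res: "1/(2*\<alpha>) * qf M (l + m - q) + 1/2 * qf Minv (K *v q - M *v yd) + (M *v yr) \<bullet> q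
       \<le> Phi_fin l q m + 1/2 * qf M yd" for l q m
    using qf_M_nonneg[of "l + m - q"] dstar_nonneg[OF a_nonpos b_nonneg, of "M *v m"] alpha_pos
    unfolding Phi_fin_def by simp_all
  obtain Rq where Rq: "\<And>q. qf (K ** Minv ** K) q + (2 *\<^sub>R (M *v yr - v)) \<bullet> q
      \<le> 2 * C + qf M yd - qf Minv (M *v yd) \<Longrightarrow> norm q \<le> Rq"
    using qf_sublevel_bounded[OF KMK_pd] unfolding bounded_iff by blast
  define Cw where "Cw = 2 * \<alpha> * (C + 1/2 * qf M yd + norm (M *v yr) * Rq)"
  obtain Rw where Rw: "\<And>w. qf M w + 0 \<bullet> w \<le> Cw \<Longrightarrow> norm w \<le> Rw"
    using qf_sublevel_bounded[OF M_pd] unfolding bounded_iff by blast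
  define Rl where "Rl = real CARD('n) * \<beta>"
  have "norm l \<le> Rl \<and> norm q \<le> Rq \<and> norm m \<le> Rw + Rl + Rq"
    if "in_box \<beta> l" "Phi_fin l q m \<le> C" for l q m
  proof -
    have q: "norm q \<le> Rq"
      using Rq lower[of q l m] that(2) qf_Minv_nonneg[of "M *v yd"]
      by (fastforce simp: split inner_commute algebra_simps)
    have "1/(2*\<alpha>) * qf M (l + m - q) \<le> C + 1/2 * qf M yd + norm (M *v yr) * Rq"
      using res[of l m q] that(2) qf_Minv_nonneg[of "K *v q - M *v yd"]
        norm_cauchy_schwarz[of "- (M *v yr)" q] mult_left_mono[OF q, of "norm (M *v yr)"] by simp
    hence "norm (l + m - q) \<le> Rw" using Rw alpha_pos by (simp add: Cw_def field_simps)
    moreover have "norm m \<le> norm (l + m - q) + norm l + norm q"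
      using norm_triangle_ineq4[of "l + m - q" l] norm_triangle_ineq[of "l + m - q - l" q] by simp
    ultimately show ?thesis using q norm_le_if_in_box[OF that(1)] by (simp add: Rl_def)
  qed
  hence "{(l, q, m). in_box \<beta> l \<and> Phi_fin l q m \<le> C} \<subseteq> cball 0 Rl \<times> cball 0 Rq \<times> cball 0 (Rw + Rl + Rq)"
    by auto
  thus ?thesis by (rule bounded_subset[rotated]) (intro bounded_Times bounded_cball)
qed

lemma half_Snorm_uminus: "half_Snorm (- l) (- m) = half_Snorm l m"
  by (simp add: half_Snorm_def qf_uminus)

lemma half_Snorm_combination:
  "(T^2 - T) * (half_Snorm (x - u) (x' - u') - half_Snorm (x - v) (x' - v'))
     + T * (half_Snorm (y - u) (y' - u') - half_Snorm (y - v) (y' - v'))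
   = half_Snorm ((T - 1) *\<^sub>R x + y - T *\<^sub>R u) ((T - 1) *\<^sub>R x' + y' - T *\<^sub>R u')
     - half_Snorm ((T - 1) *\<^sub>R x + y - T *\<^sub>R v) ((T - 1) *\<^sub>R x' + y' - T *\<^sub>R v')"
proof -
  have "(T^2 - T) * (half_Snorm (x - u) (x' - u') - half_Snorm (x - v) (x' - v'))
      + T * (half_Snorm (y - u) (y' - u') - half_Snorm (y - v) (y' - v'))
     = 1/(2*\<alpha>) * (((T^2 - T) * (qf S_lam (x - u) - qf S_lam (x - v)) + T * (qf S_lam (y - u) - qf S_lam (y - v)))
         + ((T^2 - T) * (qf S_mu (x' - u') - qf S_mu (x' - v')) + T * (qf S_mu (y' - u') - qf S_mu (y' - v'))))"
    unfolding half_Snorm_def using alpha_pos by (simp add: field_simps)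
  also have "\<dots> = half_Snorm ((T - 1) *\<^sub>R x + y - T *\<^sub>R u) ((T - 1) *\<^sub>R x' + y' - T *\<^sub>R u')
     - half_Snorm ((T - 1) *\<^sub>R x + y - T *\<^sub>R v) ((T - 1) *\<^sub>R x' + y' - T *\<^sub>R v')"
    unfolding qf_combination half_Snorm_def using alpha_pos by (simp add: field_simps)
  finally show ?thesis .
qed

text \<open>The energy E k = t_k^2 (Phi(z^k) - Phi(z^* )) + 1/2 |z^* - u^k|_S^2, with
  u^k = z^(k-1) + t_k (z^k - z^(k-1)), is nonincreasing: as t_(k+1)^2 - t_(k+1) = t_k^2, the
  descent inequalities at z = z^k and at z = z^* combine with weights t_k^2 and t_(k+1).\<close>
lemma accelerated_energy_bound:
  fixes lam p mu lt mt :: "nat \<Rightarrow> real^'n" and t :: "nat \<Rightarrow> real"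
  assumes init: "lt 1 = lam 0" "mt 1 = mu 0" "t 1 = 1"
    and steps: "\<And>k. k \<ge> 1 \<Longrightarrow> sgs_step (lt k) (mt k) (lam k) (p k) (mu k)"
    and t_rec: "\<And>k. k \<ge> 1 \<Longrightarrow> t (k + 1) = (1 + sqrt (1 + 4 * (t k)^2)) / 2"
    and lt_rec: "\<And>k. k \<ge> 1 \<Longrightarrow> lt (k + 1) = lam k + ((t k - 1) / t (k + 1)) *\<^sub>R (lam k - lam (k - 1))"
    and mt_rec: "\<And>k. k \<ge> 1 \<Longrightarrow> mt (k + 1) = mu k + ((t k - 1) / t (k + 1)) *\<^sub>R (mu k - mu (k - 1))"
    and ls_box: "in_box \<beta> ls" and k: "k \<ge> 1"
  shows "(t k)^2 * (Phi_fin (lam k) (p k) (mu k) - Phi_fin ls ps ms) \<le> half_Snorm (lam 0 - ls) (mu 0 - ms)"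
proof -
  define \<Phi> where "\<Phi> k = Phi_fin (lam k) (p k) (mu k) - Phi_fin ls ps ms" for k
  define ul where "ul k = lam (k - 1) + t k *\<^sub>R (lam k - lam (k - 1))" for k
  define um where "um k = mu (k - 1) + t k *\<^sub>R (mu k - mu (k - 1))" for k
  define E where "E k = (t k)^2 * \<Phi> k + half_Snorm (ls - ul k) (ms - um k)" for k
  have "E k \<le> half_Snorm (ls - lam 0) (ms - mu 0)"
    using k
  proof (induction k rule: dec_induct)
    case base
    show ?case
      using descent_inequality[OF steps[of 1] ls_box, of ms ps]
      unfolding E_def ul_def um_def \<Phi>_def init by simp
  next
    case (step n)
    define T where "T = t (Suc n)"
    have T: "T \<ge> 1" using fista_momentum_lower_bound[of t, OF init(3) t_rec, of "Suc n"] by (simp add: T_def)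
    have TT: "T^2 - T = (t n)^2" using fista_momentum_sq[OF t_rec[OF step.hyps(1)]] by (simp add: T_def)
    have to_prev: "half_Snorm (lam n - lam (Suc n)) (mu n - mu (Suc n))
        - half_Snorm (lam n - lt (Suc n)) (mu n - mt (Suc n)) \<le> \<Phi> n - \<Phi> (Suc n)"
      using descent_inequality[OF steps, of "Suc n" "lam n" "mu n" "p n"] steps[of n] step.hyps(1)
      unfolding \<Phi>_def sgs_step_def by auto
    have to_opt: "half_Snorm (ls - lam (Suc n)) (ms - mu (Suc n))
        - half_Snorm (ls - lt (Suc n)) (ms - mt (Suc n)) \<le> - \<Phi> (Suc n)"
      using descent_inequality[OF steps ls_box, of "Suc n" ms ps] unfolding \<Phi>_def by simp
    have sc: "T *\<^sub>R (((t n - 1) / T) *\<^sub>R w) = (t n - 1) *\<^sub>R w" for w :: "real^'n" using T by simp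
    have extrap: "(T - 1) *\<^sub>R lam n + ls - T *\<^sub>R lt (Suc n) = ls - ul n"
      "(T - 1) *\<^sub>R mu n + ms - T *\<^sub>R mt (Suc n) = ms - um n"
      unfolding lt_rec[OF step.hyps(1), simplified, folded T_def] mt_rec[OF step.hyps(1), simplified, folded T_def]
        ul_def um_def scaleR_add_right sc
      by (simp_all add: algebra_simps)
    have new: "(T - 1) *\<^sub>R lam n + ls - T *\<^sub>R lam (Suc n) = ls - ul (Suc n)"
      "(T - 1) *\<^sub>R mu n + ms - T *\<^sub>R mu (Suc n) = ms - um (Suc n)"
      by (simp_all add: ul_def um_def T_def algebra_simps)
    have "half_Snorm (ls - ul (Suc n)) (ms - um (Suc n)) - half_Snorm (ls - ul n) (ms - um n)
        \<le> (t n)^2 * (\<Phi> n - \<Phi> (Suc n)) - T * \<Phi> (Suc n)"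
      using half_Snorm_combination[of T "lam n" "lam (Suc n)" "mu n" "mu (Suc n)" "lt (Suc n)" "mt (Suc n)" ls ms]
        mult_left_mono[OF to_prev, of "(t n)^2"] mult_left_mono[OF to_opt, of T] T
      unfolding TT extrap new by simp
    hence "E (Suc n) \<le> E n"
      unfolding E_def using TT by (simp add: T_def algebra_simps power2_eq_square)
    thus ?case using step.IH by linarith
  qed
  thus ?thesis
    using half_Snorm_nonneg[of "ls - ul k" "ms - um k"] half_Snorm_uminus[of "ls - lam 0" "ms - mu 0"]
    unfolding E_def \<Phi>_def by simp
qed

lemma Phi_h_in_box: "in_box \<beta> l \<Longrightarrow> Phi_h K M yd yr \<alpha> \<beta> a b l p m = ereal (Phi_fin l p m)"
  by (simp add: Phi_h_def Phi_fin_def Minv_def)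

lemma tau_h_eq_half_Snorm: "tau_h K M W \<gamma> \<alpha> l0 m0 ls ms = half_Snorm (l0 - ls) (m0 - ms)"
  by (simp add: tau_h_def half_Snorm_def S_lam_def S_mu_def G_def Ginv_def Minv_def Winv_def Let_def)

lemma sgs_mabcd_iterates:
  assumes "sgs_mabcd K M W \<gamma> yd yr \<alpha> \<beta> a b lam p mu"
  obtains lt mt and t :: "nat \<Rightarrow> real" where "lt 1 = lam 0" "mt 1 = mu 0" "t 1 = 1"
    and "\<And>k. k \<ge> 1 \<Longrightarrow> sgs_step (lt k) (mt k) (lam k) (p k) (mu k)"
    and "\<And>k. k \<ge> 1 \<Longrightarrow> t (k + 1) = (1 + sqrt (1 + 4 * (t k)^2)) / 2"
    and "\<And>k. k \<ge> 1 \<Longrightarrow> lt (k + 1) = lam k + ((t k - 1) / t (k + 1)) *\<^sub>R (lam k - lam (k - 1))"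
    and "\<And>k. k \<ge> 1 \<Longrightarrow> mt (k + 1) = mu k + ((t k - 1) / t (k + 1)) *\<^sub>R (mu k - mu (k - 1))"
  using assms unfolding sgs_mabcd_def
  apply (elim exE conjE)
  subgoal premises prems for lt pt mt ph t
  proof (rule that[of lt mt t])
    fix k :: nat assume "k \<ge> 1"
    note step = prems(6)[rule_format, OF this]
    from step show "sgs_step (lt k) (mt k) (lam k) (p k) (mu k)" unfolding sgs_step_def by blast
    from step show "t (k + 1) = (1 + sqrt (1 + 4 * (t k)^2)) / 2" by (elim conjE)
    from step show "lt (k + 1) = lam k + ((t k - 1) / t (k + 1)) *\<^sub>R (lam k - lam (k - 1))" by (elim conjE)
    from step show "mt (k + 1) = mu k + ((t k - 1) / t (k + 1)) *\<^sub>R (mu k - mu (k - 1))" by (elim conjE)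
  qed (use prems in simp_all)
  done

lemma sgs_mabcd_convergence:
  assumes opt: "\<And>l q m. Phi_h K M yd yr \<alpha> \<beta> a b ls ps ms \<le> Phi_h K M yd yr \<alpha> \<beta> a b l q m"
    and init: "in_box \<beta> (lam 0)"
    and alg: "sgs_mabcd K M W \<gamma> yd yr \<alpha> \<beta> a b lam p mu"
  shows "(\<forall>k\<ge>1. Phi_h K M yd yr \<alpha> \<beta> a b (lam k) (p k) (mu k) - Phi_h K M yd yr \<alpha> \<beta> a b ls ps ms
              \<le> ereal (4 * half_Snorm (lam 0 - ls) (mu 0 - ms) / (real k + 1)\<^sup>2))
         \<and> bounded (range (\<lambda>k. (lam k, p k, mu k)))"
proof -
  obtain lt mt and t :: "nat \<Rightarrow> real" where start: "lt 1 = lam 0" "mt 1 = mu 0" "t 1 = 1"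
    and steps: "\<And>k. k \<ge> 1 \<Longrightarrow> sgs_step (lt k) (mt k) (lam k) (p k) (mu k)"
    and t_rec: "\<And>k. k \<ge> 1 \<Longrightarrow> t (k + 1) = (1 + sqrt (1 + 4 * (t k)^2)) / 2"
    and lt_rec: "\<And>k. k \<ge> 1 \<Longrightarrow> lt (k + 1) = lam k + ((t k - 1) / t (k + 1)) *\<^sub>R (lam k - lam (k - 1))"
    and mt_rec: "\<And>k. k \<ge> 1 \<Longrightarrow> mt (k + 1) = mu k + ((t k - 1) / t (k + 1)) *\<^sub>R (mu k - mu (k - 1))"
    by (rule sgs_mabcd_iterates[OF alg]) (rule that)
  have box: "in_box \<beta> (lam k)" for k
    using init steps[of k] by (cases "k = 0") (auto simp: sgs_step_def)
  have ls_box: "in_box \<beta> ls"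
    using opt[of "lam 0" 0 0] Phi_h_in_box[OF init] by (auto simp: Phi_h_def split: if_splits)
  define \<tau> where "\<tau> = half_Snorm (lam 0 - ls) (mu 0 - ms)"
  have tau_nonneg: "0 \<le> \<tau>" by (simp add: \<tau>_def half_Snorm_nonneg)
  have rate: "Phi_fin (lam k) (p k) (mu k) - Phi_fin ls ps ms \<le> 4 * \<tau> / (real k + 1)^2" if k: "k \<ge> 1" for k
  proof (rule rate_from_momentum)
    show "(t k)^2 * (Phi_fin (lam k) (p k) (mu k) - Phi_fin ls ps ms) \<le> \<tau>"
      unfolding \<tau>_def by (rule accelerated_energy_bound[OF start steps t_rec lt_rec mt_rec ls_box k])
    show "(real k + 1) / 2 \<le> t k"
      by (rule fista_momentum_lower_bound[of t, OF start(3) t_rec k])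
    show "0 \<le> \<tau>" by (rule tau_nonneg)
  qed
  have "(lam k, p k, mu k) \<in> insert (lam 0, p 0, mu 0) {(l, q, m). in_box \<beta> l \<and> Phi_fin l q m \<le> Phi_fin ls ps ms + \<tau>}"
    for k
  proof (cases "k = 0")
    case False
    hence k: "k \<ge> 1" by simp
    have "(2::real)^2 \<le> (real k + 1)^2" using k by (intro power_mono) auto
    hence "4 * \<tau> / (real k + 1)^2 \<le> 4 * \<tau> / 4"
      using tau_nonneg by (intro divide_left_mono) auto
    thus ?thesis using box[of k] rate[OF k] by simp
  qed simp
  hence "range (\<lambda>k. (lam k, p k, mu k))
      \<subseteq> insert (lam 0, p 0, mu 0) {(l, q, m). in_box \<beta> l \<and> Phi_fin l q m \<le> Phi_fin ls ps ms + \<tau>}"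
    by blast
  hence "bounded (range (\<lambda>k. (lam k, p k, mu k)))"
    by (rule bounded_subset[rotated]) (simp only: bounded_insert Phi_fin_sublevel_bounded)
  moreover have "Phi_h K M yd yr \<alpha> \<beta> a b (lam k) (p k) (mu k) - Phi_h K M yd yr \<alpha> \<beta> a b ls ps ms
      \<le> ereal (4 * \<tau> / (real k + 1)\<^sup>2)" if "k \<ge> 1" for k
    using rate[OF that] by (simp add: Phi_h_in_box[OF box] Phi_h_in_box[OF ls_box])
  ultimately show ?thesis unfolding \<tau>_def by blast
qed

end

theorem theorem3:
  fixes K M W :: "real^'n^'n" and yd yr :: "real^'n"
    and \<alpha> \<beta> a b \<gamma> :: real
    and lam p mu :: "nat \<Rightarrow> real^'n"
    and ls ps ms :: "real^'n"
  assumes K_sym: "transpose K = K" and K_pd: "\<And>x. x \<noteq> 0 \<Longrightarrow> qf K x > 0"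
    and M_sym: "transpose M = M" and M_pd: "\<And>x. x \<noteq> 0 \<Longrightarrow> qf M x > 0"
    and W_diag: "\<And>i j. i \<noteq> j \<Longrightarrow> W $ i $ j = 0" and W_pos: "\<And>i. W $ i $ i > 0"
    and gamma: "\<gamma> = 4 \<or> \<gamma> = 5"
    and MW: "\<And>z. qf M z \<le> qf W z" and WM: "\<And>z. qf W z \<le> \<gamma> * qf M z"
    and ab: "a \<le> 0" "0 \<le> b" and alpha: "\<alpha> > 0" and beta: "\<beta> > 0"
    and opt: "\<And>l q m. Phi_h K M yd yr \<alpha> \<beta> a b ls ps ms \<le> Phi_h K M yd yr \<alpha> \<beta> a b l q m"
    and init: "in_box \<beta> (lam 0)"
    and alg: "sgs_mabcd K M W \<gamma> yd yr \<alpha> \<beta> a b lam p mu"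
  shows "(\<forall>k\<ge>1. Phi_h K M yd yr \<alpha> \<beta> a b (lam k) (p k) (mu k) - Phi_h K M yd yr \<alpha> \<beta> a b ls ps ms
              \<le> ereal (4 * tau_h K M W \<gamma> \<alpha> (lam 0) (mu 0) ls ms / (real k + 1)\<^sup>2))
         \<and> bounded (range (\<lambda>k. (lam k, p k, mu k)))"
proof -
  \<comment> \<open>W_pos, beta and the particular value of gamma are not needed: M <= W already makes W
     positive definite.\<close>
  have "transpose W = W"
    unfolding transpose_def by (simp add: vec_eq_iff) (metis W_diag)
  moreover have "\<gamma> > 0" using gamma by auto
  ultimately interpret sgs_setting K M W yd yr \<alpha> \<beta> a b \<gamma>
    using K_sym K_pd M_sym M_pd MW WM ab alpha by unfold_locales
  show ?thesis using sgs_mabcd_convergence[OF opt init alg] by (simp add: tau_h_eq_half_Snorm)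
qed

end
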